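(* Consider the procedures $\mathrm{Solve}_\mathsf{E}$ and $\mathrm{Solve}_\mathsf{O}$ defined in the context (Algorithm 2). Let $G$ be a subgame, $p_\mathsf{E},p_\mathsf{O}$ positive integers, and $d$ a nonnegative integer not smaller than the maximal priority in $G$. If $d$ is even, the set returned by $\mathrm{Solve}_\mathsf{E}(G,d,p_\mathsf{E},p_\mathsf{O})$ (i) contains every dominion of Even in $G$ of size at most $p_\mathsf{E}$, and (ii) is disjoint from every dominion of Odd in $G$ of size at most $p_\mathsf{O}$. If $d$ is odd, the set returned by $\mathrm{Solve}_\mathsf{O}(G,d,p_\mathsf{O},p_\mathsf{E})$ (i) contains every dominion of Odd in $G$ of size at most $p_\mathsf{O}$, and (ii) is disjoint from every dominion of Even in $G$ of size at most $p_\mathsf{E}$. (In particular, all loops in the procedures terminate.)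
   Context: A parity game is $\mathcal{G}=(V,V_\mathsf{E},E,\pi)$: $(V,E)$ a finite directed graph without self-loops, every vertex having a successor; $\pi\colon V\to\{1,\dots,d\}$ positive priorities; $V_\mathsf{E}$ Even's vertices, $V_\mathsf{O}=V\setminus V_\mathsf{E}$ Odd's vertices. A play is won by Even iff the highest priority seen infinitely often is even, else by Odd. A subgame is given by $G\subseteq V$ in which every vertex has a successor in $G$. A dominion of player $\wp$ in $G$ is $D\subseteq G$ such that from every $v\in D$, $\wp$ has a winning strategy in $G$ agreeing only with plays staying forever in $D$. $\mathrm{Attr}_\wp(S,G)$ is the set of vertices from which $\wp$ has a strategy in $G$ agreeing only with plays reaching $S$. Algorithm 2. $\mathrm{Solve}_\mathsf{E}(G,d,p_\mathsf{E},p_\mathsf{O})$ (for even $d$): if $G=\emptyset$ or $p_\mathsf{E}\le 1$, return $\emptyset$. Otherwise: repeat $\{N_d:=\{v\in G:\pi(v)=d\}$; $H:=G\setminus\mathrm{Attr}_\mathsf{E}(N_d,G)$; $W_\mathsf{O}:=\mathrm{Solve}_\mathsf{O}(H,d-1,\lfloor p_\mathsf{O}/2\rfloor,p_\mathsf{E})$; $G:=G\setminus\mathrm{Attr}_\mathsf{O}(W_\mathsf{O},G)\}$ until $W_\mathsf{O}=\emptyset$. Then (with $H$ from the last repeat iteration) $W_\mathsf{O}:=\mathrm{Solve}_\mathsf{O}(H,d-1,p_\mathsf{O},p_\mathsf{E})$; $G:=G\setminus\mathrm{Attr}_\mathsf{O}(W_\mathsf{O},G)$. Then while $W_\mathsf{O}\ne\emptyset$: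 $\{N_d:=\{v\in G:\pi(v)=d\}$; $H:=G\setminus\mathrm{Attr}_\mathsf{E}(N_d,G)$; $W_\mathsf{O}:=\mathrm{Solve}_\mathsf{O}(H,d-1,\lfloor p_\mathsf{O}/2\rfloor,p_\mathsf{E})$; $G:=G\setminus\mathrm{Attr}_\mathsf{O}(W_\mathsf{O},G)\}$. Return $G$. $\mathrm{Solve}_\mathsf{O}(G,d,p_\mathsf{O},p_\mathsf{E})$ (for odd $d$) is the dual, obtained by swapping the roles of Even and Odd: it returns $\emptyset$ if $G=\emptyset$ or $p_\mathsf{O}\le 1$; otherwise it uses $H:=G\setminus\mathrm{Attr}_\mathsf{O}(N_d,G)$, $W_\mathsf{E}:=\mathrm{Solve}_\mathsf{E}(H,d-1,\lfloor p_\mathsf{E}/2\rfloor,p_\mathsf{O})$ in both loops, $W_\mathsf{E}:=\mathrm{Solve}_\mathsf{E}(H,d-1,p_\mathsf{E},p_\mathsf{O})$ in the middle step, and updates $G:=G\setminus\mathrm{Attr}_\mathsf{E}(W_\mathsf{E},G)$. *)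

theory Defs
  imports Main
begin

datatype player = Even | Odd

fun opp :: "player \<Rightarrow> player" where
  "opp Even = Odd" | "opp Odd = Even"

definition parity_game :: "'v set \<Rightarrow> 'v set \<Rightarrow> ('v \<times> 'v) set \<Rightarrow> ('v \<Rightarrow> nat) \<Rightarrow> bool" where
  "parity_game V VE E pr \<longleftrightarrow> finite V \<and> VE \<subseteq> V \<and> E \<subseteq> V \<times> V
     \<and> (\<forall>v. (v, v) \<notin> E) \<and> (\<forall>v\<in>V. \<exists>w. (v, w) \<in> E) \<and> (\<forall>v\<in>V. 1 \<le> pr v)"

definition subgame :: "'v set \<Rightarrow> ('v \<times> 'v) set \<Rightarrow> 'v set \<Rightarrow> bool" where
  "subgame V E G \<longleftrightarrow> G \<subseteq> V \<and> (\<forall>v\<in>G. \<exists>w\<in>G. (v, w) \<in> E)"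

fun owns :: "'v set \<Rightarrow> player \<Rightarrow> 'v \<Rightarrow> bool" where
  "owns VE Even v = (v \<in> VE)" | "owns VE Odd v = (v \<notin> VE)"

definition play_in :: "('v \<times> 'v) set \<Rightarrow> 'v set \<Rightarrow> (nat \<Rightarrow> 'v) \<Rightarrow> bool" where
  "play_in E G \<rho> \<longleftrightarrow> (\<forall>i. \<rho> i \<in> G \<and> (\<rho> i, \<rho> (Suc i)) \<in> E)"

definition strategy_in :: "'v set \<Rightarrow> ('v \<times> 'v) set \<Rightarrow> player \<Rightarrow> 'v set \<Rightarrow> ('v list \<Rightarrow> 'v) \<Rightarrow> bool" where
  "strategy_in VE E P G \<sigma> \<longleftrightarrow>
     (\<forall>h. h \<noteq> [] \<and> last h \<in> G \<and> owns VE P (last h) \<longrightarrow> \<sigma> h \<in> G \<and> (last h, \<sigma> h) \<in> E)"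

definition agrees :: "'v set \<Rightarrow> player \<Rightarrow> ('v list \<Rightarrow> 'v) \<Rightarrow> (nat \<Rightarrow> 'v) \<Rightarrow> bool" where
  "agrees VE P \<sigma> \<rho> \<longleftrightarrow> (\<forall>i. owns VE P (\<rho> i) \<longrightarrow> \<rho> (Suc i) = \<sigma> (map \<rho> [0..<Suc i]))"

definition wins :: "('v \<Rightarrow> nat) \<Rightarrow> player \<Rightarrow> (nat \<Rightarrow> 'v) \<Rightarrow> bool" where
  "wins pr P \<rho> \<longleftrightarrow> (\<exists>p. infinite {i. pr (\<rho> i) = p}
      \<and> (\<forall>q. infinite {i. pr (\<rho> i) = q} \<longrightarrow> q \<le> p) \<and> (even p \<longleftrightarrow> P = Even))"

definition attr :: "'v set \<Rightarrow> ('v \<times> 'v) set \<Rightarrow> player \<Rightarrow> 'v set \<Rightarrow> 'v set \<Rightarrow> 'v set" where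
  "attr VE E P S G = {v \<in> G. \<exists>\<sigma>. strategy_in VE E P G \<sigma> \<and>
      (\<forall>\<rho>. play_in E G \<rho> \<and> \<rho> 0 = v \<and> agrees VE P \<sigma> \<rho> \<longrightarrow> (\<exists>i. \<rho> i \<in> S))}"

definition dominion :: "'v set \<Rightarrow> ('v \<times> 'v) set \<Rightarrow> ('v \<Rightarrow> nat) \<Rightarrow> player \<Rightarrow> 'v set \<Rightarrow> 'v set \<Rightarrow> bool" where
  "dominion VE E pr P G D \<longleftrightarrow> D \<subseteq> G \<and> (\<forall>v\<in>D. \<exists>\<sigma>. strategy_in VE E P G \<sigma> \<and>
      (\<forall>\<rho>. play_in E G \<rho> \<and> \<rho> 0 = v \<and> agrees VE P \<sigma> \<rho> \<longrightarrow> (\<forall>i. \<rho> i \<in> D) \<and> wins pr P \<rho>))"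

definition subH :: "'v set \<Rightarrow> ('v \<times> 'v) set \<Rightarrow> ('v \<Rightarrow> nat) \<Rightarrow> player \<Rightarrow> 'v set \<Rightarrow> nat \<Rightarrow> 'v set" where
  "subH VE E pr P G d = G - attr VE E P {v \<in> G. pr v = d} G"

text \<open>Big-step semantics of Algorithm 2, uniformly for both players:
  solve P G d p q R  means that Solve_P(G, d, p, q) terminates and returns R,
  where p is P's own size bound and q the opponent's (so Solve_E(G,d,pE,pO) is
  solve Even G d pE pO and Solve_O(G,d,pO,pE) is solve Odd G d pO pE).
  loopA describes the repeat-until loop (final value of G),
  loopB the final while loop (current G, current W, returned set).\<close>
inductive solve :: "'v set \<Rightarrow> ('v \<times> 'v) set \<Rightarrow> ('v \<Rightarrow> nat) \<Rightarrow> player \<Rightarrow> 'v set \<Rightarrow> nat \<Rightarrow> nat \<Rightarrow> nat \<Rightarrow> 'v set \<Rightarrow> bool"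
  and loopA :: "'v set \<Rightarrow> ('v \<times> 'v) set \<Rightarrow> ('v \<Rightarrow> nat) \<Rightarrow> player \<Rightarrow> nat \<Rightarrow> nat \<Rightarrow> nat \<Rightarrow> 'v set \<Rightarrow> 'v set \<Rightarrow> bool"
  and loopB :: "'v set \<Rightarrow> ('v \<times> 'v) set \<Rightarrow> ('v \<Rightarrow> nat) \<Rightarrow> player \<Rightarrow> nat \<Rightarrow> nat \<Rightarrow> nat \<Rightarrow> 'v set \<Rightarrow> 'v set \<Rightarrow> 'v set \<Rightarrow> bool"
  for VE E pr
where
  solve_base: "G = {} \<or> p \<le> 1 \<Longrightarrow> solve VE E pr P G d p q {}"
| solve_main: "\<lbrakk> G \<noteq> {}; 1 < p;
     loopA VE E pr P d p q G G1;
     solve VE E pr (opp P) (subH VE E pr P G1 d) (d - 1) q p W;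
     loopB VE E pr P d p q (G1 - attr VE E (opp P) W G1) W R \<rbrakk>
   \<Longrightarrow> solve VE E pr P G d p q R"
| loopA_stop: "solve VE E pr (opp P) (subH VE E pr P G d) (d - 1) (q div 2) p {}
   \<Longrightarrow> loopA VE E pr P d p q G G"
| loopA_step: "\<lbrakk> solve VE E pr (opp P) (subH VE E pr P G d) (d - 1) (q div 2) p W; W \<noteq> {};
     loopA VE E pr P d p q (G - attr VE E (opp P) W G) G' \<rbrakk>
   \<Longrightarrow> loopA VE E pr P d p q G G'"
| loopB_stop: "loopB VE E pr P d p q G {} G"
| loopB_step: "\<lbrakk> W \<noteq> {};
     solve VE E pr (opp P) (subH VE E pr P G d) (d - 1) (q div 2) p W';
     loopB VE E pr P d p q (G - attr VE E (opp P) W' G) W' R \<rbrakk>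
   \<Longrightarrow> loopB VE E pr P d p q G W R"

end

theory Submission
  imports Defs
begin

text \<open>
  The proof is by induction on \<open>d\<close>, for both players \<open>P\<close> at once. The loops terminate because
  every iteration with a nonempty recursive result removes at least that result from \<open>G\<close>.

  A small \<open>P\<close>-dominion \<open>D\<close> survives every removal: \<open>H = G - Attr_P(N_d, G)\<close> is a trap for \<open>P\<close>, so
  \<open>D \<inter> H\<close> is a small \<open>P\<close>-dominion of \<open>H\<close>, which the recursive call avoids, and the opponent
  attractor of a set disjoint from \<open>D\<close> is disjoint from \<open>D\<close>.

  For opponent dominions the key fact is that every nonempty opponent dominion \<open>D\<close> of \<open>G\<close> contains
  a nonempty opponent dominion of \<open>H\<close>: otherwise \<open>P\<close>, playing against the opponent's winning
  strategy on \<open>D\<close>, could re-enter \<open>Attr_P(N_d, G)\<close> forever and so see the top priority \<open>d\<close>, which has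
  \<open>P\<close>'s parity, infinitely often. When the first loop stops, the call with bound \<open>q/2\<close> finds
  nothing, so every such dominion of \<open>H\<close> inside an opponent dominion of size at most \<open>q\<close> has
  more than \<open>q/2\<close> vertices and is removed by the middle call; what is left has at most \<open>q/2\<close>
  vertices and is removed by the second loop.
\<close>

lemma owns_opp [simp]: "owns VE (opp P) v \<longleftrightarrow> \<not> owns VE P v"
  by (cases P) auto

lemma opp_opp [simp]: "opp (opp P) = P"
  by (cases P) auto

section \<open>Infinite sequences\<close>

function prolong :: "(nat \<Rightarrow> 'v) \<Rightarrow> nat \<Rightarrow> ('v list \<Rightarrow> 'v) \<Rightarrow> nat \<Rightarrow> 'v" where
  "prolong \<psi> n f i = (if i \<le> n then \<psi> i else f (map (prolong \<psi> n f) [0..<i]))"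
  by auto
termination by (relation "measure (\<lambda>(_, _, _, i). i)") auto

declare prolong.simps [simp del]

lemma prolong_prefix: "i \<le> n \<Longrightarrow> prolong \<psi> n f i = \<psi> i"
  by (simp add: prolong.simps)

lemma prolong_Suc: "n \<le> i \<Longrightarrow> prolong \<psi> n f (Suc i) = f (map (prolong \<psi> n f) [0..<Suc i])"
  by (subst prolong.simps) (simp del: upt_Suc)

definition graft :: "nat \<Rightarrow> (nat \<Rightarrow> 'v) \<Rightarrow> (nat \<Rightarrow> 'v) \<Rightarrow> nat \<Rightarrow> 'v" where
  "graft n \<rho> \<pi> k = (if k < n then \<rho> k else \<pi> (k - n))"

lemma graft_shift [simp]: "graft n \<rho> \<pi> (n + k) = \<pi> k"
  by (simp add: graft_def)

lemma map_graft: "map (graft n \<rho> \<pi>) [0..<Suc (n + i)] = map \<rho> [0..<n] @ map \<pi> [0..<Suc i]"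
  by (rule nth_equalityI) (auto simp: nth_append graft_def simp del: upt_Suc)

lemma last_map_upt: "last (map \<rho> [0..<Suc i]) = \<rho> i"
  by simp

lemma drop_map_upt: "drop j (map \<pi> [0..<Suc (j + k)]) = map (\<lambda>k. \<pi> (j + k)) [0..<Suc k]"
  by (rule nth_equalityI) (simp_all del: upt_Suc)

lemma prefix_coherent_limit:
  fixes f :: "nat \<Rightarrow> nat \<Rightarrow> 'a" and n :: "nat \<Rightarrow> nat"
  assumes mono: "strict_mono n" and coherent: "\<And>k i. i \<le> n k \<Longrightarrow> f (Suc k) i = f k i"
  shows "\<exists>\<rho>. \<forall>k i. i \<le> n k \<longrightarrow> \<rho> i = f k i"
proof -
  have stable: "f m i = f k i" if "k \<le> m" "i \<le> n k" for k m i
    using that(1)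
  proof (induction m rule: dec_induct)
    case (step m)
    have "i \<le> n m" using step.hyps(1) that(2) mono by (meson order_trans strict_mono_less_eq)
    then show ?case using step.IH coherent[of i m] by simp
  qed simp
  have "f i i = f k i" if "i \<le> n k" for k i
  proof (cases "k \<le> i")
    case True then show ?thesis using stable that by blast
  next
    case False
    have "i \<le> n i" using mono by (rule strict_mono_imp_increasing)
    then show ?thesis using stable[of i k i] False by simp
  qed
  then show ?thesis by (intro exI[of _ "\<lambda>i. f i i"]) blast
qed

lemma extension_sequence:
  fixes ok :: "(nat \<Rightarrow> 'a) \<Rightarrow> bool"
  assumes "ok \<rho>0"
    and extend: "\<And>\<rho> n. ok \<rho> \<Longrightarrow> \<exists>\<rho>' j. ok \<rho>' \<and> (\<forall>i\<le>n. \<rho>' i = \<rho> i) \<and> n \<le> j \<and> \<rho>' j \<in> N"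
  shows "\<exists>f m. strict_mono m \<and> (\<forall>k. ok (f k)) \<and> (\<forall>k i. i \<le> m k \<longrightarrow> f (Suc k) i = f k i) \<and>
    (\<forall>k. \<exists>j. m k \<le> j \<and> j < m (Suc k) \<and> f (Suc k) j \<in> N)"
proof -
  have "\<exists>\<rho>' j. ok \<rho> \<longrightarrow> ok \<rho>' \<and> (\<forall>i\<le>n. \<rho>' i = \<rho> i) \<and> n \<le> j \<and> \<rho>' j \<in> N" for \<rho> n
    using extend by blast
  then obtain next_play visit where next_play: "\<And>\<rho> n. ok \<rho> \<Longrightarrow> ok (next_play \<rho> n) \<and>
      (\<forall>i\<le>n. next_play \<rho> n i = \<rho> i) \<and> n \<le> visit \<rho> n \<and> next_play \<rho> n (visit \<rho> n) \<in> N"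
    by metis
  define stage where "stage = rec_nat (\<rho>0, 0) (\<lambda>_ (\<rho>, n). (next_play \<rho> n, Suc (visit \<rho> n)))"
  define f where "f k = fst (stage k)" for k
  define m where "m k = snd (stage k)" for k
  have f_Suc: "f (Suc k) = next_play (f k) (m k)" and m_Suc: "m (Suc k) = Suc (visit (f k) (m k))" for k
    by (simp_all add: f_def m_def stage_def split: prod.split)
  have ok: "ok (f k)" for k
  proof (induction k)
    case 0 then show ?case using \<open>ok \<rho>0\<close> by (simp add: f_def stage_def)
  next
    case (Suc k) then show ?case using next_play by (simp add: f_Suc)
  qed
  have step: "(\<forall>i\<le>m k. f (Suc k) i = f k i) \<and> m k \<le> visit (f k) (m k) \<and> f (Suc k) (visit (f k) (m k)) \<in> N"
    for k
    unfolding f_Suc using next_play[OF ok[of k]] by blast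
  then have "strict_mono m"
    unfolding strict_mono_Suc_iff m_Suc by (simp add: le_imp_less_Suc)
  moreover have "\<exists>j. m k \<le> j \<and> j < m (Suc k) \<and> f (Suc k) j \<in> N" for k
    using step[of k] m_Suc[of k] by (intro exI[of _ "visit (f k) (m k)"]) simp
  ultimately show ?thesis using ok step by blast
qed

lemma limit_of_extensions:
  fixes ok :: "(nat \<Rightarrow> 'a) \<Rightarrow> bool"
  assumes "ok \<rho>0"
    and "\<And>\<rho> n. ok \<rho> \<Longrightarrow> \<exists>\<rho>' j. ok \<rho>' \<and> (\<forall>i\<le>n. \<rho>' i = \<rho> i) \<and> n \<le> j \<and> \<rho>' j \<in> N"
  shows "\<exists>\<rho>. (\<forall>i. \<exists>\<pi>. ok \<pi> \<and> (\<forall>j\<le>i. \<rho> j = \<pi> j)) \<and> infinite {i. \<rho> i \<in> N}"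
proof -
  obtain f m where mono: "strict_mono m" and ok: "\<And>k. ok (f k)"
    and coherent: "\<And>k i. i \<le> m k \<Longrightarrow> f (Suc k) i = f k i"
    and visit: "\<And>k. \<exists>j. m k \<le> j \<and> j < m (Suc k) \<and> f (Suc k) j \<in> N"
    using extension_sequence[OF assms] by blast
  obtain \<rho> where \<rho>: "\<And>k i. i \<le> m k \<Longrightarrow> \<rho> i = f k i"
    using prefix_coherent_limit[of m f, OF mono coherent] by blast
  have increasing: "k \<le> m k" for k
    using mono by (rule strict_mono_imp_increasing)
  have "\<forall>j\<le>i. \<rho> j = f i j" for i
    using \<rho> increasing[of i] order_trans by blast
  then have "\<forall>i. \<exists>\<pi>. ok \<pi> \<and> (\<forall>j\<le>i. \<rho> j = \<pi> j)" using ok by blast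
  moreover have "infinite {i. \<rho> i \<in> N}"
  proof
    assume "finite {i. \<rho> i \<in> N}"
    then obtain b where b: "\<forall>j\<in>{i. \<rho> i \<in> N}. j \<le> b"
      using finite_nat_set_iff_bounded_le by blast
    obtain j where j: "m (Suc b) \<le> j" "j < m (Suc (Suc b))" "f (Suc (Suc b)) j \<in> N"
      using visit by blast
    then have "\<rho> j \<in> N" using \<rho>[of j "Suc (Suc b)"] by simp
    moreover have "Suc b \<le> j" using j(1) increasing[of "Suc b"] by linarith
    ultimately show False using b by fastforce
  qed
  ultimately show ?thesis by blast
qed

lemma infinite_shift_iff: "infinite {i. P (n + i)} \<longleftrightarrow> infinite {i::nat. P i}"
  using eventually_sequentially_seg[of "\<lambda>i. \<not> P i" n]
  by (simp add: frequently_cofinite[symmetric] cofinite_eq_sequentially frequently_def add.commute)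

lemma wins_shift: "wins pr X \<rho> \<Longrightarrow> wins pr X (\<lambda>i. \<rho> (n + i))"
  unfolding wins_def using infinite_shift_iff[of "\<lambda>i. pr (\<rho> i) = _" n] by simp

lemma not_wins_opp_top_priority:
  assumes "\<forall>i. pr (\<rho> i) \<le> d" and "infinite {i. pr (\<rho> i) = d}" and "even d \<longleftrightarrow> P = Even"
  shows "\<not> wins pr (opp P) \<rho>"
proof
  assume "wins pr (opp P) \<rho>"
  then obtain q where q: "infinite {i. pr (\<rho> i) = q}" "\<forall>r. infinite {i. pr (\<rho> i) = r} \<longrightarrow> r \<le> q"
    "even q \<longleftrightarrow> opp P = Even"
    unfolding wins_def by blast
  obtain i where "pr (\<rho> i) = q" using q(1) not_finite_existsD by blast
  then have "q = d" using q(2) assms(1,2) by (metis le_antisym)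
  then show False using q(3) assms(3) by (cases P) auto
qed

section \<open>Plays and strategies\<close>

locale arena =
  fixes V VE :: "'v set" and E :: "('v \<times> 'v) set" and pr :: "'v \<Rightarrow> nat"
begin

definition some_succ :: "'v set \<Rightarrow> 'v \<Rightarrow> 'v" where
  "some_succ G v = (SOME w. w \<in> G \<and> (v, w) \<in> E)"

lemma some_succ: "subgame V E G \<Longrightarrow> v \<in> G \<Longrightarrow> some_succ G v \<in> G \<and> (v, some_succ G v) \<in> E"
  unfolding some_succ_def subgame_def by (rule someI_ex) blast

lemma strategy_some_succ: "subgame V E G \<Longrightarrow> strategy_in VE E X G (\<lambda>h. some_succ G (last h))"
  unfolding strategy_in_def using some_succ by blast

lemma strategy_move:
  assumes "strategy_in VE E X G \<sigma>" and "\<rho> i \<in> G" and "owns VE X (\<rho> i)"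
  shows "\<sigma> (map \<rho> [0..<Suc i]) \<in> G \<and> (\<rho> i, \<sigma> (map \<rho> [0..<Suc i])) \<in> E"
proof -
  have "map \<rho> [0..<Suc i] \<noteq> []" by simp
  then show ?thesis using assms unfolding strategy_in_def by (metis last_map_upt)
qed

definition path_upto :: "'v set \<Rightarrow> nat \<Rightarrow> (nat \<Rightarrow> 'v) \<Rightarrow> bool" where
  "path_upto G n \<psi> \<longleftrightarrow> (\<forall>k\<le>n. \<psi> k \<in> G) \<and> (\<forall>k<n. (\<psi> k, \<psi> (Suc k)) \<in> E)"

definition consistent_upto :: "nat \<Rightarrow> player \<Rightarrow> ('v list \<Rightarrow> 'v) \<Rightarrow> (nat \<Rightarrow> 'v) \<Rightarrow> bool" where
  "consistent_upto n X \<sigma> \<psi> \<longleftrightarrow> (\<forall>k<n. owns VE X (\<psi> k) \<longrightarrow> \<psi> (Suc k) = \<sigma> (map \<psi> [0..<Suc k]))"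

lemma path_upto_play: "play_in E G \<rho> \<Longrightarrow> path_upto G n \<rho>"
  by (simp add: path_upto_def play_in_def)

lemma consistent_upto_agrees: "agrees VE X \<sigma> \<rho> \<Longrightarrow> consistent_upto n X \<sigma> \<rho>"
  by (simp add: consistent_upto_def agrees_def)

lemma play_extension:
  assumes G: "subgame V E G" and \<sigma>: "strategy_in VE E X G \<sigma>" and \<tau>: "strategy_in VE E (opp X) G \<tau>"
    and \<psi>: "path_upto G n \<psi>"
  shows "\<exists>\<rho>. play_in E G \<rho> \<and> (\<forall>k\<le>n. \<rho> k = \<psi> k) \<and>
    (\<forall>i\<ge>n. \<rho> (Suc i) = (if owns VE X (\<rho> i) then \<sigma> else \<tau>) (map \<rho> [0..<Suc i]))"
proof -
  define f where "f h = (if owns VE X (last h) then \<sigma> h else \<tau> h)" for h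
  define \<rho> where "\<rho> = prolong \<psi> n f"
  have prefix: "\<rho> k = \<psi> k" if "k \<le> n" for k
    using that by (simp add: \<rho>_def prolong_prefix)
  have next_move: "\<rho> (Suc i) = f (map \<rho> [0..<Suc i])" if "n \<le> i" for i
    using that by (simp add: \<rho>_def prolong_Suc del: upt_Suc)
  have move: "f (map \<rho> [0..<Suc i]) \<in> G \<and> (\<rho> i, f (map \<rho> [0..<Suc i])) \<in> E" if "\<rho> i \<in> G" for i
    using strategy_move[of X G \<sigma> \<rho> i] strategy_move[of "opp X" G \<tau> \<rho> i] that \<sigma> \<tau>
    by (simp add: f_def last_map_upt)
  have in_G: "\<rho> i \<in> G" for i
  proof (induction i)
    case 0 then show ?case using \<psi> prefix by (simp add: path_upto_def)
  next
    case (Suc i) then show ?case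
      using \<psi> prefix move next_move by (cases "Suc i \<le> n") (auto simp: path_upto_def simp del: upt_Suc)
  qed
  have "(\<rho> i, \<rho> (Suc i)) \<in> E" for i
    using \<psi> prefix move[OF in_G] next_move by (cases "i < n") (auto simp: path_upto_def simp del: upt_Suc)
  then have "play_in E G \<rho>" using in_G by (simp add: play_in_def)
  then show ?thesis using prefix next_move by (auto simp: f_def last_map_upt simp del: upt_Suc)
qed

lemma agrees_from_prefix:
  assumes "\<forall>k\<le>n. \<rho> k = \<psi> k" and "consistent_upto n X \<sigma> \<psi>"
    and "\<forall>i\<ge>n. owns VE X (\<rho> i) \<longrightarrow> \<rho> (Suc i) = \<sigma> (map \<rho> [0..<Suc i])"
  shows "agrees VE X \<sigma> \<rho>"
  unfolding agrees_def
proof (intro allI impI)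
  fix i assume owner: "owns VE X (\<rho> i)"
  show "\<rho> (Suc i) = \<sigma> (map \<rho> [0..<Suc i])"
  proof (cases "n \<le> i")
    case False
    then have "map \<rho> [0..<Suc i] = map \<psi> [0..<Suc i]" using assms(1) by (intro map_cong) auto
    then show ?thesis using assms(1,2) owner False unfolding consistent_upto_def
      by (metis Suc_leI le_eq_less_or_eq not_le)
  qed (use assms(3) owner in blast)
qed

lemma play_extension_agrees:
  assumes "subgame V E G" and "strategy_in VE E X G \<sigma>"
    and "path_upto G n \<psi>" and "consistent_upto n X \<sigma> \<psi>"
  shows "\<exists>\<rho>. play_in E G \<rho> \<and> (\<forall>k\<le>n. \<rho> k = \<psi> k) \<and> agrees VE X \<sigma> \<rho>"
proof -
  obtain \<rho> where \<rho>: "play_in E G \<rho>" "\<forall>k\<le>n. \<rho> k = \<psi> k"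
    and moves: "\<forall>i\<ge>n. \<rho> (Suc i) = (if owns VE X (\<rho> i) then \<sigma> else (\<lambda>h. some_succ G (last h))) (map \<rho> [0..<Suc i])"
    using play_extension[OF assms(1,2) strategy_some_succ[OF assms(1)] assms(3)] by blast
  have "agrees VE X \<sigma> \<rho>"
    by (rule agrees_from_prefix[OF \<rho>(2) assms(4)]) (use moves in auto)
  then show ?thesis using \<rho> by blast
qed

lemma play_exists:
  assumes "subgame V E G" and "strategy_in VE E X G \<sigma>" and "v \<in> G"
  shows "\<exists>\<rho>. play_in E G \<rho> \<and> \<rho> 0 = v \<and> agrees VE X \<sigma> \<rho>"
  using play_extension_agrees[OF assms(1,2), of 0 "\<lambda>_. v"] assms(3)
  by (auto simp: path_upto_def consistent_upto_def)

lemma play_exists_both: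
  assumes "subgame V E G" and "strategy_in VE E X G \<sigma>" and "strategy_in VE E (opp X) G \<tau>"
    and "v \<in> G"
  shows "\<exists>\<rho>. play_in E G \<rho> \<and> \<rho> 0 = v \<and> agrees VE X \<sigma> \<rho> \<and> agrees VE (opp X) \<tau> \<rho>"
  using play_extension[OF assms(1-3), of 0 "\<lambda>_. v"] assms(4)
  by (auto simp: path_upto_def agrees_def)

lemma play_agrees_of_prefixes:
  assumes "\<forall>i. \<exists>\<pi>. play_in E G \<pi> \<and> agrees VE X \<tau> \<pi> \<and> (\<forall>j\<le>Suc i. \<rho> j = \<pi> j)"
  shows "play_in E G \<rho> \<and> agrees VE X \<tau> \<rho>"
proof -
  have "\<rho> i \<in> G \<and> (\<rho> i, \<rho> (Suc i)) \<in> E \<and>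
    (owns VE X (\<rho> i) \<longrightarrow> \<rho> (Suc i) = \<tau> (map \<rho> [0..<Suc i]))" for i
  proof -
    obtain \<pi> where \<pi>: "play_in E G \<pi>" "agrees VE X \<tau> \<pi>" "\<forall>j\<le>Suc i. \<rho> j = \<pi> j"
      using assms by blast
    have "map \<rho> [0..<Suc i] = map \<pi> [0..<Suc i]" using \<pi>(3) by (intro map_cong) auto
    moreover have "\<rho> i = \<pi> i" "\<rho> (Suc i) = \<pi> (Suc i)" using \<pi>(3) by auto
    ultimately show ?thesis using \<pi>(1,2) unfolding play_in_def agrees_def by metis
  qed
  then show ?thesis unfolding play_in_def agrees_def by blast
qed

definition shift_strategy :: "nat \<Rightarrow> 'v set \<Rightarrow> ('v list \<Rightarrow> 'v) \<Rightarrow> 'v list \<Rightarrow> 'v" where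
  "shift_strategy j G \<sigma> h = (if j < length h then \<sigma> (drop j h) else some_succ G (last h))"

lemma strategy_shift:
  assumes "subgame V E G" and "strategy_in VE E X G \<sigma>"
  shows "strategy_in VE E X G (shift_strategy j G \<sigma>)"
  unfolding strategy_in_def
proof (intro allI impI)
  fix h assume h: "h \<noteq> [] \<and> last h \<in> G \<and> owns VE X (last h)"
  show "shift_strategy j G \<sigma> h \<in> G \<and> (last h, shift_strategy j G \<sigma> h) \<in> E"
  proof (cases "j < length h")
    case True
    then have "drop j h \<noteq> []" "last (drop j h) = last h" by auto
    then show ?thesis using assms(2) h True unfolding strategy_in_def shift_strategy_def by metis
  next
    case False
    then show ?thesis using some_succ[OF assms(1)] h by (simp add: shift_strategy_def)
  qed
qed

lemma agrees_shift:
  assumes "\<forall>i\<ge>j. owns VE X (\<rho> i) \<longrightarrow> \<rho> (Suc i) = shift_strategy j G \<sigma> (map \<rho> [0..<Suc i])"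
  shows "agrees VE X \<sigma> (\<lambda>k. \<rho> (j + k))"
  unfolding agrees_def
proof (intro allI impI)
  fix k assume "owns VE X (\<rho> (j + k))"
  then have "\<rho> (Suc (j + k)) = \<sigma> (drop j (map \<rho> [0..<Suc (j + k)]))"
    using assms by (simp add: shift_strategy_def del: upt_Suc)
  then show "\<rho> (j + Suc k) = \<sigma> (map (\<lambda>k. \<rho> (j + k)) [0..<Suc k])"
    by (simp add: drop_map_upt del: upt_Suc)
qed

section \<open>Attractors, traps and dominions\<close>

lemma attr_subset: "attr VE E X S G \<subseteq> G"
  by (auto simp: attr_def)

lemma attr_contains: "subgame V E G \<Longrightarrow> S \<inter> G \<subseteq> attr VE E X S G"
  unfolding attr_def using strategy_some_succ by blast

lemma attr_uniform_strategy:
  assumes G: "subgame V E G"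
  shows "\<exists>\<sigma>. strategy_in VE E X G \<sigma> \<and> (\<forall>w\<in>attr VE E X S G. \<forall>\<rho>.
    play_in E G \<rho> \<and> \<rho> 0 = w \<and> agrees VE X \<sigma> \<rho> \<longrightarrow> (\<exists>i. \<rho> i \<in> S))"
proof -
  have "\<forall>w. \<exists>\<sigma>. strategy_in VE E X G \<sigma> \<and> (w \<in> attr VE E X S G \<longrightarrow>
    (\<forall>\<rho>. play_in E G \<rho> \<and> \<rho> 0 = w \<and> agrees VE X \<sigma> \<rho> \<longrightarrow> (\<exists>i. \<rho> i \<in> S)))"
    using strategy_some_succ[OF G] unfolding attr_def by blast
  then obtain f where f: "\<And>w. strategy_in VE E X G (f w)"
    and reach: "\<And>w \<rho>. w \<in> attr VE E X S G \<Longrightarrow> play_in E G \<rho> \<Longrightarrow> \<rho> 0 = w \<Longrightarrow>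
      agrees VE X (f w) \<rho> \<Longrightarrow> \<exists>i. \<rho> i \<in> S"
    by metis
  define \<sigma> where "\<sigma> h = f (hd h) h" for h
  have "strategy_in VE E X G \<sigma>"
    using f unfolding strategy_in_def \<sigma>_def by blast
  moreover have "agrees VE X (f (\<rho> 0)) \<rho>" if "agrees VE X \<sigma> \<rho>" for \<rho>
    using that unfolding agrees_def \<sigma>_def by (simp add: hd_map del: upt_Suc)
  ultimately show ?thesis using reach by blast
qed

lemma attr_predecessor:
  assumes G: "subgame V E G" and u: "u \<in> G"
    and step: "if owns VE X u then \<exists>w\<in>attr VE E X S G. (u, w) \<in> E
      else \<forall>w\<in>G. (u, w) \<in> E \<longrightarrow> w \<in> attr VE E X S G"
  shows "u \<in> attr VE E X S G"
proof -
  let ?A = "attr VE E X S G"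
  obtain \<sigma>A where \<sigma>A: "strategy_in VE E X G \<sigma>A"
    and reach: "\<forall>w\<in>?A. \<forall>\<rho>. play_in E G \<rho> \<and> \<rho> 0 = w \<and> agrees VE X \<sigma>A \<rho> \<longrightarrow> (\<exists>i. \<rho> i \<in> S)"
    using attr_uniform_strategy[OF G] by blast
  obtain w0 where w0: "owns VE X u \<Longrightarrow> w0 \<in> ?A \<and> (u, w0) \<in> E"
    using step by (cases "owns VE X u") auto
  define \<sigma> where "\<sigma> h = (if h = [u] then w0 else shift_strategy 1 G \<sigma>A h)" for h
  have strategy: "strategy_in VE E X G \<sigma>"
    using strategy_shift[OF G \<sigma>A, of 1] w0 attr_subset[of X S G]
    unfolding strategy_in_def \<sigma>_def by auto
  have "\<exists>i. \<rho> i \<in> S" if \<rho>: "play_in E G \<rho>" "\<rho> 0 = u" "agrees VE X \<sigma> \<rho>" for \<rho>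
  proof -
    have "\<rho> 1 \<in> ?A"
    proof (cases "owns VE X u")
      case True
      then have "\<rho> (Suc 0) = \<sigma> (map \<rho> [0..<Suc 0])" using \<rho>(2,3) unfolding agrees_def by blast
      then show ?thesis using True w0 \<rho>(2) by (simp add: \<sigma>_def)
    next
      case False
      have "\<rho> 1 \<in> G" "(u, \<rho> 1) \<in> E" using \<rho>(1,2) unfolding play_in_def by (metis One_nat_def)+
      then show ?thesis using False step by simp
    qed
    have "\<rho> (Suc i) = shift_strategy 1 G \<sigma>A (map \<rho> [0..<Suc i])" if "1 \<le> i" "owns VE X (\<rho> i)" for i
    proof -
      have "length (map \<rho> [0..<Suc i]) \<noteq> length [u]" using that(1) by simp
      then show ?thesis using \<rho>(3) that(2) unfolding agrees_def \<sigma>_def by auto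
    qed
    then have "agrees VE X \<sigma>A (\<lambda>k. \<rho> (1 + k))" by (intro agrees_shift) blast
    moreover have "play_in E G (\<lambda>k. \<rho> (1 + k))" using \<rho>(1) by (simp add: play_in_def)
    ultimately obtain i where "\<rho> (1 + i) \<in> S" using reach \<open>\<rho> 1 \<in> ?A\<close> by auto
    then show ?thesis by blast
  qed
  then show ?thesis using strategy u unfolding attr_def by blast
qed

definition trap :: "player \<Rightarrow> 'v set \<Rightarrow> 'v set \<Rightarrow> bool" where
  "trap X S T \<longleftrightarrow> T \<subseteq> S \<and> subgame V E T \<and> (\<forall>u\<in>T. owns VE X u \<longrightarrow> (\<forall>w\<in>S. (u, w) \<in> E \<longrightarrow> w \<in> T))"

lemma trap_refl: "subgame V E S \<Longrightarrow> trap X S S"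
  unfolding trap_def by blast

lemma trap_trans: "trap X S T \<Longrightarrow> trap X T U \<Longrightarrow> trap X S U"
  unfolding trap_def by blast

lemma trap_compl_attr:
  assumes S: "subgame V E S"
  shows "trap X S (S - attr VE E X W S)"
proof -
  let ?A = "attr VE E X W S"
  have closed: "w \<in> S - ?A" if "u \<in> S - ?A" "owns VE X u" "w \<in> S" "(u, w) \<in> E" for u w
    using that attr_predecessor[OF S, of u X W] by auto
  have "\<exists>w\<in>S - ?A. (u, w) \<in> E" if u: "u \<in> S - ?A" for u
  proof (cases "owns VE X u")
    case True
    then show ?thesis using S u closed unfolding subgame_def by blast
  next
    case False
    then show ?thesis using u attr_predecessor[OF S, of u X W] by auto
  qed
  then show ?thesis using S closed unfolding trap_def subgame_def by blast
qed

lemma dominion_trap: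
  assumes T: "trap X S T" and D: "dominion VE E pr X S D"
  shows "dominion VE E pr X T (D \<inter> T)"
  unfolding dominion_def
proof (intro conjI ballI)
  fix v assume v: "v \<in> D \<inter> T"
  obtain \<sigma> where \<sigma>: "strategy_in VE E X S \<sigma>"
    and win: "\<forall>\<rho>. play_in E S \<rho> \<and> \<rho> 0 = v \<and> agrees VE X \<sigma> \<rho> \<longrightarrow> (\<forall>i. \<rho> i \<in> D) \<and> wins pr X \<rho>"
    using D v unfolding dominion_def by blast
  have "strategy_in VE E X T \<sigma>" using \<sigma> T unfolding strategy_in_def trap_def by blast
  moreover have "play_in E S \<rho>" if "play_in E T \<rho>" for \<rho>
    using that T unfolding play_in_def trap_def by blast
  ultimately show "\<exists>\<sigma>. strategy_in VE E X T \<sigma> \<and>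
    (\<forall>\<rho>. play_in E T \<rho> \<and> \<rho> 0 = v \<and> agrees VE X \<sigma> \<rho> \<longrightarrow> (\<forall>i. \<rho> i \<in> D \<inter> T) \<and> wins pr X \<rho>)"
    using win unfolding play_in_def by blast
qed blast

lemma attr_dominion_disjoint:
  assumes G: "subgame V E G" and D: "dominion VE E pr X G D" and disjoint: "W \<inter> D = {}"
  shows "attr VE E (opp X) W G \<inter> D = {}"
proof (rule ccontr)
  assume "attr VE E (opp X) W G \<inter> D \<noteq> {}"
  then obtain v where v: "v \<in> D" "v \<in> attr VE E (opp X) W G" by blast
  obtain \<sigma> where \<sigma>: "strategy_in VE E X G \<sigma>"
    and win: "\<forall>\<rho>. play_in E G \<rho> \<and> \<rho> 0 = v \<and> agrees VE X \<sigma> \<rho> \<longrightarrow> (\<forall>i. \<rho> i \<in> D)"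
    using D v unfolding dominion_def by blast
  obtain \<tau> where \<tau>: "strategy_in VE E (opp X) G \<tau>" and "v \<in> G"
    and reach: "\<forall>\<rho>. play_in E G \<rho> \<and> \<rho> 0 = v \<and> agrees VE (opp X) \<tau> \<rho> \<longrightarrow> (\<exists>i. \<rho> i \<in> W)"
    using v unfolding attr_def by blast
  obtain \<rho> where "play_in E G \<rho>" "\<rho> 0 = v" "agrees VE X \<sigma> \<rho>" "agrees VE (opp X) \<tau> \<rho>"
    using play_exists_both[OF G \<sigma> \<tau> \<open>v \<in> G\<close>] by blast
  then show False using win reach disjoint by blast
qed

section \<open>Restricting strategies to subgames\<close>

text \<open>
  Where \<open>\<sigma>\<close> would leave \<open>T\<close>, the residual strategy falls back to an arbitrary move; along plays
  that \<open>confined_after\<close> keeps inside \<open>T\<close> this never happens (see \<open>graft_agrees\<close>).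
\<close>

definition residual :: "'v list \<Rightarrow> 'v set \<Rightarrow> ('v list \<Rightarrow> 'v) \<Rightarrow> 'v list \<Rightarrow> 'v" where
  "residual h T \<sigma> g = (if \<sigma> (h @ g) \<in> T then \<sigma> (h @ g) else some_succ T (last g))"

definition confined_after :: "'v set \<Rightarrow> player \<Rightarrow> ('v list \<Rightarrow> 'v) \<Rightarrow> (nat \<Rightarrow> 'v) \<Rightarrow> nat \<Rightarrow> 'v set \<Rightarrow> bool" where
  "confined_after G X \<sigma> \<rho> n T \<longleftrightarrow>
    (\<forall>\<rho>'. play_in E G \<rho>' \<and> agrees VE X \<sigma> \<rho>' \<and> (\<forall>i\<le>n. \<rho>' i = \<rho> i) \<longrightarrow> (\<forall>j\<ge>n. \<rho>' j \<in> T))"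

lemma strategy_residual:
  assumes "subgame V E T" and "T \<subseteq> G" and "strategy_in VE E X G \<sigma>"
  shows "strategy_in VE E X T (residual h T \<sigma>)"
  unfolding strategy_in_def
proof (intro allI impI)
  fix g assume g: "g \<noteq> [] \<and> last g \<in> T \<and> owns VE X (last g)"
  then have "(last g, \<sigma> (h @ g)) \<in> E"
    using assms(2,3) unfolding strategy_in_def by (metis Nil_is_append_conv last_appendR subsetD)
  then show "residual h T \<sigma> g \<in> T \<and> (last g, residual h T \<sigma> g) \<in> E"
    using some_succ[OF assms(1)] g by (auto simp: residual_def)
qed

lemma graft_play:
  assumes "play_in E G \<rho>" and "play_in E T \<pi>" and "T \<subseteq> G" and "\<pi> 0 = \<rho> n"
  shows "play_in E G (graft n \<rho> \<pi>)"
  unfolding play_in_def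
proof
  fix k
  consider "Suc k < n" | "Suc k = n" | "n \<le> k" by linarith
  then show "graft n \<rho> \<pi> k \<in> G \<and> (graft n \<rho> \<pi> k, graft n \<rho> \<pi> (Suc k)) \<in> E"
  proof cases
    case 3
    then have "Suc k - n = Suc (k - n)" by simp
    then show ?thesis using 3 assms(2,3) by (auto simp: graft_def play_in_def)
  qed (use assms(1,4) in \<open>auto simp: graft_def play_in_def\<close>)
qed

lemma confined_move:
  assumes G: "subgame V E G" and \<sigma>: "strategy_in VE E X G \<sigma>" and confined: "confined_after G X \<sigma> \<rho> n T"
    and \<psi>: "path_upto G m \<psi>" "consistent_upto m X \<sigma> \<psi>" "\<forall>k\<le>n. \<psi> k = \<rho> k" "n \<le> m"
    and owner: "owns VE X (\<psi> m)"
  shows "\<sigma> (map \<psi> [0..<Suc m]) \<in> T"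
proof -
  obtain \<rho>' where \<rho>': "play_in E G \<rho>'" "\<forall>k\<le>m. \<rho>' k = \<psi> k" "agrees VE X \<sigma> \<rho>'"
    using play_extension_agrees[OF G \<sigma> \<psi>(1,2)] by blast
  have "map \<rho>' [0..<Suc m] = map \<psi> [0..<Suc m]" using \<rho>'(2) by (intro map_cong) auto
  moreover have "\<rho>' (Suc m) = \<sigma> (map \<rho>' [0..<Suc m])" using \<rho>'(2,3) owner unfolding agrees_def by simp
  moreover have "\<forall>k\<le>n. \<rho>' k = \<rho> k" using \<rho>'(2) \<psi>(3,4) by simp
  then have "\<rho>' (Suc m) \<in> T" using confined \<rho>'(1,3) \<psi>(4) unfolding confined_after_def by simp
  ultimately show ?thesis by metis
qed

lemma graft_agrees:
  assumes G: "subgame V E G" and T: "T \<subseteq> G" and \<sigma>: "strategy_in VE E X G \<sigma>"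
    and \<rho>: "play_in E G \<rho>" "agrees VE X \<sigma> \<rho>" and confined: "confined_after G X \<sigma> \<rho> n T"
    and \<pi>: "play_in E T \<pi>" "\<pi> 0 = \<rho> n" "agrees VE X (residual (map \<rho> [0..<n]) T \<sigma>) \<pi>"
  shows "agrees VE X \<sigma> (graft n \<rho> \<pi>)"
proof -
  let ?\<psi> = "graft n \<rho> \<pi>"
  have play: "play_in E G ?\<psi>" using graft_play[OF \<rho>(1) \<pi>(1) T \<pi>(2)] .
  have prefix: "?\<psi> k = \<rho> k" if "k \<le> n" for k
    using that \<pi>(2) by (auto simp: graft_def)
  have consistent: "consistent_upto (n + i) X \<sigma> ?\<psi>" for i
  proof (induction i)
    case 0
    have "map ?\<psi> [0..<Suc k] = map \<rho> [0..<Suc k]" if "k < n" for k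
      using that prefix by (intro map_cong) auto
    then show ?case using \<rho>(2) prefix unfolding consistent_upto_def agrees_def
      by (metis Suc_leI add_0_right less_imp_le_nat)
  next
    case (Suc i)
    have "?\<psi> (Suc (n + i)) = \<sigma> (map ?\<psi> [0..<Suc (n + i)])" if owner: "owns VE X (?\<psi> (n + i))"
    proof -
      have "\<sigma> (map ?\<psi> [0..<Suc (n + i)]) \<in> T"
        using confined_move[OF G \<sigma> confined path_upto_play[OF play] Suc.IH] prefix owner by simp
      moreover have "\<pi> (Suc i) = residual (map \<rho> [0..<n]) T \<sigma> (map \<pi> [0..<Suc i])"
        using \<pi>(3) owner unfolding agrees_def by simp
      moreover have "?\<psi> (Suc (n + i)) = \<pi> (Suc i)" by (simp add: graft_def)
      ultimately show ?thesis by (simp add: residual_def map_graft del: upt_Suc)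
    qed
    then show ?case using Suc.IH unfolding consistent_upto_def by (auto simp: less_Suc_eq)
  qed
  show ?thesis unfolding agrees_def
  proof (intro allI impI)
    fix k assume "owns VE X (?\<psi> k)"
    then show "?\<psi> (Suc k) = \<sigma> (map ?\<psi> [0..<Suc k])"
      using consistent[of "Suc k"] unfolding consistent_upto_def by (simp del: upt_Suc)
  qed
qed

definition win_inside :: "player \<Rightarrow> 'v set \<Rightarrow> 'v set \<Rightarrow> 'v set" where
  "win_inside X T D = {u \<in> T. \<exists>\<sigma>. strategy_in VE E X T \<sigma> \<and>
     (\<forall>\<rho>. play_in E T \<rho> \<and> \<rho> 0 = u \<and> agrees VE X \<sigma> \<rho> \<longrightarrow> (\<forall>i. \<rho> i \<in> D) \<and> wins pr X \<rho>)}"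

lemma dominion_iff_win_inside: "dominion VE E pr X T D \<longleftrightarrow> D \<subseteq> win_inside X T D"
  unfolding dominion_def win_inside_def by blast

lemma win_inside_after_prefix:
  assumes G: "subgame V E G" and T: "subgame V E T" "T \<subseteq> G" and \<sigma>: "strategy_in VE E X G \<sigma>"
    and win: "\<forall>\<rho>. play_in E G \<rho> \<and> \<rho> 0 = u \<and> agrees VE X \<sigma> \<rho> \<longrightarrow> (\<forall>i. \<rho> i \<in> D) \<and> wins pr X \<rho>"
    and \<rho>: "play_in E G \<rho>" "\<rho> 0 = u" "agrees VE X \<sigma> \<rho>" and confined: "confined_after G X \<sigma> \<rho> n T"
  shows "\<rho> n \<in> win_inside X T D"
proof -
  let ?\<sigma>' = "residual (map \<rho> [0..<n]) T \<sigma>"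
  have "(\<forall>i. \<pi> i \<in> D) \<and> wins pr X \<pi>"
    if \<pi>: "play_in E T \<pi>" "\<pi> 0 = \<rho> n" "agrees VE X ?\<sigma>' \<pi>" for \<pi>
  proof -
    have "play_in E G (graft n \<rho> \<pi>)" "agrees VE X \<sigma> (graft n \<rho> \<pi>)"
      using graft_play[OF \<rho>(1) \<pi>(1) T(2) \<pi>(2)] graft_agrees[OF G T(2) \<sigma> \<rho>(1,3) confined \<pi>] .
    moreover have "graft n \<rho> \<pi> 0 = u" using \<rho>(2) \<pi>(2) by (cases "n = 0") (auto simp: graft_def)
    ultimately have graft_in_D: "\<forall>i. graft n \<rho> \<pi> i \<in> D" and "wins pr X (graft n \<rho> \<pi>)"
      using win by blast+
    then have "wins pr X (\<lambda>i. graft n \<rho> \<pi> (n + i))" by (intro wins_shift)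
    then show ?thesis using graft_in_D[rule_format, of "n + _"] by simp
  qed
  moreover have "\<rho> n \<in> T" using confined \<rho> unfolding confined_after_def by blast
  ultimately show ?thesis unfolding win_inside_def using strategy_residual[OF T(1,2) \<sigma>] by blast
qed

lemma win_inside_subset:
  assumes "subgame V E T" shows "win_inside X T D \<subseteq> D"
proof
  fix u assume "u \<in> win_inside X T D"
  then obtain \<sigma> where \<sigma>: "strategy_in VE E X T \<sigma>" and "u \<in> T"
    and win: "\<forall>\<rho>. play_in E T \<rho> \<and> \<rho> 0 = u \<and> agrees VE X \<sigma> \<rho> \<longrightarrow> (\<forall>i. \<rho> i \<in> D)"
    unfolding win_inside_def by blast
  then show "u \<in> D" using play_exists[OF assms \<sigma> \<open>u \<in> T\<close>] by metis
qed

lemma dominion_win_inside: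
  assumes T: "subgame V E T" shows "dominion VE E pr X T (win_inside X T D)"
  unfolding dominion_iff_win_inside
proof
  fix u assume "u \<in> win_inside X T D"
  then obtain \<sigma> where \<sigma>: "strategy_in VE E X T \<sigma>" and "u \<in> T"
    and win: "\<forall>\<rho>. play_in E T \<rho> \<and> \<rho> 0 = u \<and> agrees VE X \<sigma> \<rho> \<longrightarrow> (\<forall>i. \<rho> i \<in> D) \<and> wins pr X \<rho>"
    unfolding win_inside_def by blast
  have "\<rho> i \<in> win_inside X T D" if "play_in E T \<rho>" "\<rho> 0 = u" "agrees VE X \<sigma> \<rho>" for \<rho> i
    using win_inside_after_prefix[OF T T order.refl \<sigma> win that] that(1)
    unfolding confined_after_def play_in_def by blast
  then show "u \<in> win_inside X T (win_inside X T D)"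
    using \<sigma> \<open>u \<in> T\<close> win unfolding win_inside_def[of X T "win_inside X T D"] by blast
qed

lemma dominion_subgame:
  assumes G: "subgame V E G" and T: "subgame V E T" "T \<subseteq> G"
    and D: "dominion VE E pr X G D" and "D \<subseteq> T"
  shows "dominion VE E pr X T D"
  unfolding dominion_iff_win_inside
proof
  fix v assume "v \<in> D"
  then obtain \<sigma> where \<sigma>: "strategy_in VE E X G \<sigma>" and "v \<in> G"
    and win: "\<forall>\<rho>. play_in E G \<rho> \<and> \<rho> 0 = v \<and> agrees VE X \<sigma> \<rho> \<longrightarrow> (\<forall>i. \<rho> i \<in> D) \<and> wins pr X \<rho>"
    using D unfolding dominion_def by blast
  obtain \<rho> where \<rho>: "play_in E G \<rho>" "\<rho> 0 = v" "agrees VE X \<sigma> \<rho>"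
    using play_exists[OF G \<sigma> \<open>v \<in> G\<close>] by blast
  have "confined_after G X \<sigma> \<rho> 0 T"
    using win \<rho>(2) \<open>D \<subseteq> T\<close> unfolding confined_after_def by auto
  then show "v \<in> win_inside X T D"
    using win_inside_after_prefix[OF G T \<sigma> win \<rho>] \<rho>(2) by metis
qed

section \<open>Forcing the top priority\<close>

lemma attr_forces_visit:
  assumes S: "subgame V E S" and \<tau>: "strategy_in VE E (opp P) S \<tau>"
    and \<rho>: "play_in E S \<rho>" "agrees VE (opp P) \<tau> \<rho>" and attracted: "\<rho> j \<in> attr VE E P N S"
  shows "\<exists>\<pi> k. play_in E S \<pi> \<and> agrees VE (opp P) \<tau> \<pi> \<and> (\<forall>i\<le>j. \<pi> i = \<rho> i) \<and> j \<le> k \<and> \<pi> k \<in> N"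
proof -
  obtain \<sigma> where \<sigma>: "strategy_in VE E P S \<sigma>"
    and reach: "\<forall>\<pi>. play_in E S \<pi> \<and> \<pi> 0 = \<rho> j \<and> agrees VE P \<sigma> \<pi> \<longrightarrow> (\<exists>i. \<pi> i \<in> N)"
    using attracted unfolding attr_def by blast
  obtain \<pi> where \<pi>: "play_in E S \<pi>" "\<forall>k\<le>j. \<pi> k = \<rho> k"
    and moves: "\<forall>i\<ge>j. \<pi> (Suc i) =
      (if owns VE P (\<pi> i) then shift_strategy j S \<sigma> else \<tau>) (map \<pi> [0..<Suc i])"
    using play_extension[OF S strategy_shift[OF S \<sigma>] \<tau> path_upto_play[OF \<rho>(1)]] by blast
  have "agrees VE (opp P) \<tau> \<pi>"
    by (rule agrees_from_prefix[OF \<pi>(2) consistent_upto_agrees[OF \<rho>(2)]]) (use moves in auto)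
  moreover have "agrees VE P \<sigma> (\<lambda>i. \<pi> (j + i))"
    by (rule agrees_shift) (use moves in auto)
  moreover have "play_in E S (\<lambda>i. \<pi> (j + i))"
    using \<pi>(1) by (simp add: play_in_def)
  ultimately obtain i where "\<pi> (j + i) \<in> N"
    using reach \<pi>(2) by fastforce
  then show ?thesis
    using \<pi> \<open>agrees VE (opp P) \<tau> \<pi>\<close> by (intro exI[of _ \<pi>] exI[of _ "j + i"]) auto
qed

lemma play_visiting_infinitely_often:
  assumes S: "subgame V E S" and \<tau>: "strategy_in VE E X S \<tau>" and "v \<in> S"
    and extend: "\<And>\<rho> n. play_in E S \<rho> \<Longrightarrow> \<rho> 0 = v \<Longrightarrow> agrees VE X \<tau> \<rho> \<Longrightarrow>
      \<exists>\<rho>' j. play_in E S \<rho>' \<and> agrees VE X \<tau> \<rho>' \<and> (\<forall>i\<le>n. \<rho>' i = \<rho> i) \<and> n \<le> j \<and> \<rho>' j \<in> N"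
  shows "\<exists>\<rho>. play_in E S \<rho> \<and> \<rho> 0 = v \<and> agrees VE X \<tau> \<rho> \<and> infinite {i. \<rho> i \<in> N}"
proof -
  define ok where "ok \<rho> \<longleftrightarrow> play_in E S \<rho> \<and> \<rho> 0 = v \<and> agrees VE X \<tau> \<rho>" for \<rho>
  obtain \<rho>0 where "ok \<rho>0" using play_exists[OF S \<tau> \<open>v \<in> S\<close>] unfolding ok_def by blast
  moreover have "\<exists>\<rho>' j. ok \<rho>' \<and> (\<forall>i\<le>n. \<rho>' i = \<rho> i) \<and> n \<le> j \<and> \<rho>' j \<in> N" if "ok \<rho>" for \<rho> n
    using extend[of \<rho> n] that unfolding ok_def by auto
  ultimately obtain \<rho> where prefixes: "\<forall>i. \<exists>\<pi>. ok \<pi> \<and> (\<forall>j\<le>i. \<rho> j = \<pi> j)"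
    and "infinite {i. \<rho> i \<in> N}"
    using limit_of_extensions[of ok] by blast
  moreover have "play_in E S \<rho> \<and> agrees VE X \<tau> \<rho>"
    using prefixes unfolding ok_def by (intro play_agrees_of_prefixes) blast
  moreover have "\<rho> 0 = v" using prefixes unfolding ok_def by force
  ultimately show ?thesis by blast
qed

text \<open>
  If no play consistent with \<open>\<tau>\<close> ever gets confined to \<open>H\<close>, then \<open>P\<close> can re-enter the attractor of
  the top priority again and again, producing a \<open>\<tau>\<close>-play that \<open>\<tau>\<close> loses.
\<close>

lemma eventually_confined_to_subH:
  assumes S: "subgame V E S" and top: "\<forall>v\<in>S. pr v \<le> d" and parity: "even d \<longleftrightarrow> P = Even"
    and \<tau>: "strategy_in VE E (opp P) S \<tau>" and "v \<in> S"
    and win: "\<forall>\<rho>. play_in E S \<rho> \<and> \<rho> 0 = v \<and> agrees VE (opp P) \<tau> \<rho> \<longrightarrow> wins pr (opp P) \<rho>"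
  shows "\<exists>\<rho> n. play_in E S \<rho> \<and> \<rho> 0 = v \<and> agrees VE (opp P) \<tau> \<rho> \<and>
    confined_after S (opp P) \<tau> \<rho> n (subH VE E pr P S d)"
proof (rule ccontr)
  let ?N = "{v \<in> S. pr v = d}"
  assume never_confined: "\<not> ?thesis"
  have "\<exists>\<rho>' j. play_in E S \<rho>' \<and> agrees VE (opp P) \<tau> \<rho>' \<and> (\<forall>i\<le>n. \<rho>' i = \<rho> i) \<and> n \<le> j \<and> \<rho>' j \<in> ?N"
    if valid: "play_in E S \<rho>" "\<rho> 0 = v" "agrees VE (opp P) \<tau> \<rho>" for \<rho> n
  proof -
    have "\<not> confined_after S (opp P) \<tau> \<rho> n (subH VE E pr P S d)" using valid never_confined by blast
    then obtain \<rho>' j where \<rho>': "play_in E S \<rho>'" "agrees VE (opp P) \<tau> \<rho>'" "\<forall>i\<le>n. \<rho>' i = \<rho> i"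
      "n \<le> j" "\<rho>' j \<notin> subH VE E pr P S d"
      unfolding confined_after_def by blast
    then have "\<rho>' j \<in> attr VE E P ?N S" unfolding subH_def play_in_def by blast
    then obtain \<pi> k where "play_in E S \<pi>" "agrees VE (opp P) \<tau> \<pi>" "\<forall>i\<le>j. \<pi> i = \<rho>' i" "j \<le> k" "\<pi> k \<in> ?N"
      using attr_forces_visit[OF S \<tau> \<rho>'(1,2)] by blast
    then show ?thesis using \<rho>'(3,4) by (intro exI[of _ \<pi>] exI[of _ k]) auto
  qed
  then obtain \<rho> where \<rho>: "play_in E S \<rho>" "\<rho> 0 = v" "agrees VE (opp P) \<tau> \<rho>" "infinite {i. \<rho> i \<in> ?N}"
    using play_visiting_infinitely_often[OF S \<tau> \<open>v \<in> S\<close>] by blast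
  have "\<forall>i. pr (\<rho> i) \<le> d" using \<rho>(1) top unfolding play_in_def by blast
  moreover have "infinite {i. pr (\<rho> i) = d}" using \<rho>(4) by (rule infinite_super[rotated]) auto
  ultimately have "\<not> wins pr (opp P) \<rho>" using not_wins_opp_top_priority parity by blast
  then show False using win \<rho>(1-3) by blast
qed

lemma dominion_in_subH:
  assumes S: "subgame V E S" and top: "\<forall>v\<in>S. pr v \<le> d" and parity: "even d \<longleftrightarrow> P = Even"
    and D: "dominion VE E pr (opp P) S D" and "D \<noteq> {}"
  shows "\<exists>X. X \<noteq> {} \<and> X \<subseteq> D \<and> dominion VE E pr (opp P) (subH VE E pr P S d) X"
proof -
  let ?H = "subH VE E pr P S d"
  have "trap P S ?H" unfolding subH_def by (rule trap_compl_attr[OF S])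
  then have H: "subgame V E ?H" "?H \<subseteq> S" unfolding trap_def by auto
  obtain v where "v \<in> D" using \<open>D \<noteq> {}\<close> by blast
  then obtain \<tau> where \<tau>: "strategy_in VE E (opp P) S \<tau>" and "v \<in> S"
    and win: "\<forall>\<rho>. play_in E S \<rho> \<and> \<rho> 0 = v \<and> agrees VE (opp P) \<tau> \<rho> \<longrightarrow>
      (\<forall>i. \<rho> i \<in> D) \<and> wins pr (opp P) \<rho>"
    using D unfolding dominion_def by blast
  then obtain \<rho> n where "play_in E S \<rho>" "\<rho> 0 = v" "agrees VE (opp P) \<tau> \<rho>"
    and "confined_after S (opp P) \<tau> \<rho> n ?H"
    using eventually_confined_to_subH[OF S top parity \<tau> \<open>v \<in> S\<close>] by blast
  then have "\<rho> n \<in> win_inside (opp P) ?H D" using win_inside_after_prefix[OF S H \<tau> win] by blast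
  then show ?thesis
    using win_inside_subset[OF H(1)] dominion_win_inside[OF H(1)]
    by (intro exI[of _ "win_inside (opp P) ?H D"]) blast
qed

end

section \<open>Correctness of Algorithm 2\<close>

lemma solve_subset:
  "solve VE E pr P G d p q R \<Longrightarrow> R \<subseteq> G"
  "loopA VE E pr P d p q G G' \<Longrightarrow> G' \<subseteq> G"
  "loopB VE E pr P d p q G W R \<Longrightarrow> R \<subseteq> G"
  by (induction rule: solve_loopA_loopB.inducts) auto

lemma loopA_induct [consumes 1, case_names stop step]:
  assumes "loopA VE E pr P d p q G G'"
    and stop: "\<And>G. solve VE E pr (opp P) (subH VE E pr P G d) (d - 1) (q div 2) p {} \<Longrightarrow> Q G G"
    and step: "\<And>G W G'. solve VE E pr (opp P) (subH VE E pr P G d) (d - 1) (q div 2) p W \<Longrightarrow> W \<noteq> {} \<Longrightarrow>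
      loopA VE E pr P d p q (G - attr VE E (opp P) W G) G' \<Longrightarrow> Q (G - attr VE E (opp P) W G) G' \<Longrightarrow>
      Q G G'"
  shows "Q G G'"
proof -
  have "P = P \<longrightarrow> d = d \<longrightarrow> p = p \<longrightarrow> q = q \<longrightarrow> Q G G'"
    by (rule solve_loopA_loopB.inducts(2)[where ?P1.0 = "\<lambda>_ _ _ _ _ _. True"
      and ?P2.0 = "\<lambda>P' d' p' q' G G'. P' = P \<longrightarrow> d' = d \<longrightarrow> p' = p \<longrightarrow> q' = q \<longrightarrow> Q G G'"
      and ?P3.0 = "\<lambda>_ _ _ _ _ _ _. True", OF assms(1)])
      (auto intro: stop step)
  then show ?thesis by simp
qed

lemma loopB_induct [consumes 1, case_names stop step]:
  assumes "loopB VE E pr P d p q G W R"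
    and stop: "\<And>G. Q G {} G"
    and step: "\<And>G W W' R. W \<noteq> {} \<Longrightarrow> solve VE E pr (opp P) (subH VE E pr P G d) (d - 1) (q div 2) p W' \<Longrightarrow>
      loopB VE E pr P d p q (G - attr VE E (opp P) W' G) W' R \<Longrightarrow>
      Q (G - attr VE E (opp P) W' G) W' R \<Longrightarrow> Q G W R"
  shows "Q G W R"
proof -
  have "P = P \<longrightarrow> d = d \<longrightarrow> p = p \<longrightarrow> q = q \<longrightarrow> Q G W R"
    by (rule solve_loopA_loopB.inducts(3)[where ?P1.0 = "\<lambda>_ _ _ _ _ _. True"
      and ?P2.0 = "\<lambda>_ _ _ _ _ _. True"
      and ?P3.0 = "\<lambda>P' d' p' q' G W R. P' = P \<longrightarrow> d' = d \<longrightarrow> p' = p \<longrightarrow> q' = q \<longrightarrow> Q G W R",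
      OF assms(1)])
      (auto intro: stop step)
  then show ?thesis by simp
qed

locale finite_game = arena V VE E pr
  for V VE :: "'v set" and E :: "('v \<times> 'v) set" and pr :: "'v \<Rightarrow> nat" +
  assumes game: "parity_game V VE E pr"
begin

lemma subgame_finite: "subgame V E S \<Longrightarrow> finite S"
  using game unfolding subgame_def parity_game_def by (meson finite_subset)

lemma dominion_finite: "subgame V E S \<Longrightarrow> dominion VE E pr X S D \<Longrightarrow> finite D"
  using subgame_finite unfolding dominion_def by (meson finite_subset)

lemma dominion_card_le_1:
  assumes G: "subgame V E G" and D: "dominion VE E pr X G D" and "card D \<le> 1"
  shows "D = {}"
proof (rule ccontr)
  assume "D \<noteq> {}"
  then obtain v where "v \<in> D" by blast
  have "card D \<le> Suc 0" using \<open>card D \<le> 1\<close> by simp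
  then have singleton: "\<forall>a\<in>D. \<forall>b\<in>D. a = b"
    using card_le_Suc0_iff_eq[OF dominion_finite[OF G D]] by blast
  have "v \<in> G" using D \<open>v \<in> D\<close> unfolding dominion_def by blast
  obtain \<sigma> where \<sigma>: "strategy_in VE E X G \<sigma>"
    and stay: "\<forall>\<rho>. play_in E G \<rho> \<and> \<rho> 0 = v \<and> agrees VE X \<sigma> \<rho> \<longrightarrow> (\<forall>i. \<rho> i \<in> D) \<and> wins pr X \<rho>"
    using D \<open>v \<in> D\<close> unfolding dominion_def by blast
  obtain \<rho> where \<rho>: "play_in E G \<rho>" "\<rho> 0 = v" "agrees VE X \<sigma> \<rho>"
    using play_exists[OF G \<sigma> \<open>v \<in> G\<close>] by blast
  then have "\<rho> 0 \<in> D" "\<rho> 1 \<in> D" using stay by blast+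
  then have "\<rho> 1 = \<rho> 0" using singleton by blast
  moreover have "(\<rho> 0, \<rho> 1) \<in> E" using \<rho>(1) unfolding play_in_def by (metis One_nat_def)
  ultimately show False using game unfolding parity_game_def by auto
qed

definition separates :: "player \<Rightarrow> 'v set \<Rightarrow> nat \<Rightarrow> nat \<Rightarrow> 'v set \<Rightarrow> bool" where
  "separates P G p q R \<longleftrightarrow> (\<forall>D. dominion VE E pr P G D \<and> card D \<le> p \<longrightarrow> D \<subseteq> R) \<and>
     (\<forall>D. dominion VE E pr (opp P) G D \<and> card D \<le> q \<longrightarrow> D \<inter> R = {})"

definition solve_correct :: "nat \<Rightarrow> bool" where
  "solve_correct d \<longleftrightarrow> (\<forall>P G p q. subgame V E G \<longrightarrow> (\<forall>v\<in>G. pr v \<le> d) \<longrightarrow> (even d \<longleftrightarrow> P = Even) \<longrightarrow>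
     (\<exists>R. solve VE E pr P G d p q R) \<and> (\<forall>R. solve VE E pr P G d p q R \<longrightarrow> separates P G p q R))"

lemma solve_correctD:
  assumes "solve_correct d" and "subgame V E G" and "\<forall>v\<in>G. pr v \<le> d" and "even d \<longleftrightarrow> P = Even"
  shows "\<exists>R. solve VE E pr P G d p q R"
    and "solve VE E pr P G d p q R \<Longrightarrow> separates P G p q R"
  using assms unfolding solve_correct_def by blast+

lemma separates_trivial:
  assumes "subgame V E G" and "G = {} \<or> p \<le> 1"
  shows "separates P G p q {}"
  unfolding separates_def
proof (intro conjI allI impI)
  fix D assume D: "dominion VE E pr P G D \<and> card D \<le> p"
  show "D \<subseteq> {}"
  proof (cases "G = {}")
    case True then show ?thesis using D unfolding dominion_def by blast
  next
    case False
    then have "card D \<le> 1" using D assms(2) by linarith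
    then show ?thesis using dominion_card_le_1[OF assms(1)] D by blast
  qed
qed simp

lemma solve_trivial: "G = {} \<or> p \<le> 1 \<Longrightarrow> solve VE E pr P G d p q R \<Longrightarrow> R = {}"
  by (cases rule: solve.cases) auto

lemma solve_correct_0: "solve_correct 0"
  unfolding solve_correct_def
proof (intro allI impI)
  fix P G p q assume G: "subgame V E G" and "\<forall>v\<in>G. pr v \<le> 0"
  then have "G = {}" using game unfolding parity_game_def subgame_def by fastforce
  then show "(\<exists>R. solve VE E pr P G 0 p q R) \<and> (\<forall>R. solve VE E pr P G 0 p q R \<longrightarrow> separates P G p q R)"
    using solve_base[of G p] solve_trivial separates_trivial[OF G] by blast
qed

end

locale solve_step = finite_game V VE E pr
  for V VE :: "'v set" and E :: "('v \<times> 'v) set" and pr :: "'v \<Rightarrow> nat" +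
  fixes d :: nat and P :: player and p q :: nat
  assumes IH: "solve_correct d" and parity: "even (Suc d) \<longleftrightarrow> P = Even"
begin

abbreviation lower :: "'v set \<Rightarrow> 'v set" where
  "lower S \<equiv> subH VE E pr P S (Suc d)"

abbreviation remove_attr :: "'v set \<Rightarrow> 'v set \<Rightarrow> 'v set" where
  "remove_attr W S \<equiv> S - attr VE E (opp P) W S"

definition admissible :: "'v set \<Rightarrow> bool" where
  "admissible S \<longleftrightarrow> subgame V E S \<and> (\<forall>v\<in>S. pr v \<le> Suc d)"

lemma trap_lower: "admissible S \<Longrightarrow> trap P S (lower S)"
  unfolding admissible_def subH_def using trap_compl_attr[of S P] by blast

lemma lower_priorities:
  assumes "admissible S" shows "\<forall>v\<in>lower S. pr v \<le> d"
proof -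
  have "{v \<in> S. pr v = Suc d} \<inter> S \<subseteq> attr VE E P {v \<in> S. pr v = Suc d} S"
    by (rule attr_contains) (use assms in \<open>simp add: admissible_def\<close>)
  then have "pr v \<noteq> Suc d" if "v \<in> lower S" for v using that unfolding subH_def by blast
  moreover have "pr v \<le> Suc d" if "v \<in> lower S" for v
    using that assms unfolding admissible_def subH_def by blast
  ultimately show ?thesis by (simp add: le_Suc_eq)
qed

lemma recursive_call:
  assumes "admissible S"
  shows "\<exists>W. solve VE E pr (opp P) (lower S) d b p W"
    and "solve VE E pr (opp P) (lower S) d b p W \<Longrightarrow> separates (opp P) (lower S) b p W"
proof -
  have "subgame V E (lower S)" using trap_lower[OF assms] unfolding trap_def by blast
  moreover have "even d \<longleftrightarrow> opp P = Even" using parity by (cases P) auto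
  ultimately show "\<exists>W. solve VE E pr (opp P) (lower S) d b p W"
    and "solve VE E pr (opp P) (lower S) d b p W \<Longrightarrow> separates (opp P) (lower S) b p W"
    using solve_correctD[OF IH _ lower_priorities[OF assms]] by blast+
qed

lemma trap_remove: "admissible S \<Longrightarrow> trap (opp P) S (remove_attr W S)"
  unfolding admissible_def using trap_compl_attr[of S "opp P" W] by blast

lemma admissible_remove: "admissible S \<Longrightarrow> admissible (remove_attr W S)"
  using trap_remove[of S W] unfolding admissible_def trap_def by blast

lemma card_remove_less:
  assumes S: "admissible S" and W: "solve VE E pr (opp P) (lower S) d b p W" "W \<noteq> {}"
  shows "card (remove_attr W S) < card S"
proof -
  have "W \<subseteq> S" using solve_subset(1)[OF W(1)] unfolding subH_def by blast
  moreover have "W \<inter> S \<subseteq> attr VE E (opp P) W S" using attr_contains S unfolding admissible_def by blast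
  ultimately have "remove_attr W S \<subset> S" using W(2) by blast
  then show ?thesis using subgame_finite S unfolding admissible_def by (meson psubset_card_mono)
qed

lemma small_dominion_survives:
  assumes S: "admissible S" and W: "solve VE E pr (opp P) (lower S) d b p W"
    and D: "dominion VE E pr P S D" "card D \<le> p"
  shows "dominion VE E pr P (remove_attr W S) D"
proof -
  have S': "subgame V E S" using S unfolding admissible_def by blast
  have "dominion VE E pr P (lower S) (D \<inter> lower S)"
    using dominion_trap[OF trap_lower[OF S] D(1)] .
  moreover have "card (D \<inter> lower S) \<le> p"
    using D dominion_finite[OF S'] by (meson card_mono inf_le1 le_trans)
  ultimately have "D \<inter> lower S \<inter> W = {}"
    using recursive_call(2)[OF S W] unfolding separates_def by simp
  moreover have "W \<subseteq> lower S" using solve_subset(1)[OF W] .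
  ultimately have "attr VE E (opp P) W S \<inter> D = {}"
    using attr_dominion_disjoint[OF S' D(1)] by blast
  then have "D \<subseteq> remove_attr W S" using D(1) unfolding dominion_def by blast
  moreover have "subgame V E (remove_attr W S)" using admissible_remove[OF S] unfolding admissible_def by blast
  ultimately show ?thesis using dominion_subgame[OF S' _ _ D(1)] by blast
qed

lemma loopA_exists: "admissible S \<Longrightarrow> \<exists>S'. loopA VE E pr P (Suc d) p q S S'"
proof (induction "card S" arbitrary: S rule: less_induct)
  case less
  obtain W where W: "solve VE E pr (opp P) (lower S) d (q div 2) p W"
    using recursive_call(1)[OF less.prems] by blast
  show ?case
  proof (cases "W = {}")
    case True
    then show ?thesis using loopA_stop[of VE E pr P S "Suc d" q p] W by auto
  next
    case False
    obtain S' where "loopA VE E pr P (Suc d) p q (remove_attr W S) S'"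
      using less.hyps[OF card_remove_less[OF less.prems W False] admissible_remove[OF less.prems]] by blast
    then show ?thesis using loopA_step[of VE E pr P S "Suc d" q p W] W False by auto
  qed
qed

lemma loopB_exists: "admissible S \<Longrightarrow> \<exists>R. loopB VE E pr P (Suc d) p q S W R"
proof (induction "card S" arbitrary: S W rule: less_induct)
  case less
  show ?case
  proof (cases "W = {}")
    case True
    then show ?thesis using loopB_stop[of VE E pr P "Suc d" p q S] by blast
  next
    case False
    obtain W' where W': "solve VE E pr (opp P) (lower S) d (q div 2) p W'"
      using recursive_call(1)[OF less.prems] by blast
    have "\<exists>R. loopB VE E pr P (Suc d) p q (remove_attr W' S) W' R"
    proof (cases "W' = {}")
      case True then show ?thesis using loopB_stop[of VE E pr P "Suc d" p q "remove_attr W' S"] by blast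
    next
      case False
      then show ?thesis
        using less.hyps[OF card_remove_less[OF less.prems W' False] admissible_remove[OF less.prems]] by blast
    qed
    then show ?thesis using loopB_step[of W VE E pr P S "Suc d" q p W'] W' False by auto
  qed
qed

lemma opp_dominion_in_lower:
  assumes "admissible S" and "dominion VE E pr (opp P) S D" and "D \<noteq> {}"
  shows "\<exists>X. X \<noteq> {} \<and> X \<subseteq> D \<and> dominion VE E pr (opp P) (lower S) X"
  using dominion_in_subH[of S "Suc d" P D] assms parity unfolding admissible_def by blast

lemma call_contains:
  assumes "admissible S" and "solve VE E pr (opp P) (lower S) d b p W"
    and "dominion VE E pr (opp P) (lower S) X" and "card X \<le> b"
  shows "X \<subseteq> W"
  using recursive_call(2)[OF assms(1,2)] assms(3,4) unfolding separates_def by blast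

lemma loopA_result:
  assumes "loopA VE E pr P (Suc d) p q S S'" and "admissible S"
  shows "admissible S' \<and> trap (opp P) S S' \<and> solve VE E pr (opp P) (lower S') d (q div 2) p {} \<and>
    (\<forall>D. dominion VE E pr P S D \<and> card D \<le> p \<longrightarrow> dominion VE E pr P S' D)"
  using assms
proof (induction rule: loopA_induct)
  case (stop G)
  then show ?case using trap_refl unfolding admissible_def by simp
next
  case (step G W G')
  have W: "solve VE E pr (opp P) (lower G) d (q div 2) p W" using step.hyps(1) by simp
  note IH = step.IH[OF admissible_remove[OF step.prems]]
  show ?case
    using IH trap_trans[OF trap_remove[OF step.prems] conjunct1[OF conjunct2[OF IH]]]
      small_dominion_survives[OF step.prems W]
    by blast
qed

lemma loopB_contains:
  assumes "loopB VE E pr P (Suc d) p q S W R" and "admissible S"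
  shows "\<forall>D. dominion VE E pr P S D \<and> card D \<le> p \<longrightarrow> D \<subseteq> R"
  using assms
proof (induction rule: loopB_induct)
  case (stop G)
  then show ?case unfolding dominion_def by blast
next
  case (step G W W' R)
  have W': "solve VE E pr (opp P) (lower G) d (q div 2) p W'" using step.hyps(2) by simp
  show ?case
    using step.IH[OF admissible_remove[OF step.prems]] small_dominion_survives[OF step.prems W'] by blast
qed

lemma no_small_opp_dominion:
  assumes S: "admissible S" and empty: "solve VE E pr (opp P) (lower S) d b p {}"
    and D: "dominion VE E pr (opp P) S D" "card D \<le> b"
  shows "D = {}"
proof (rule ccontr)
  assume "D \<noteq> {}"
  then obtain X where X: "X \<noteq> {}" "X \<subseteq> D" "dominion VE E pr (opp P) (lower S) X"
    using opp_dominion_in_lower[OF S D(1)] by blast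
  have "card X \<le> b"
    using card_mono[OF dominion_finite[OF _ D(1)] X(2)] D(2) S unfolding admissible_def by linarith
  then show False using call_contains[OF S empty X(3)] X(1) by blast
qed

lemma loopB_avoids:
  assumes "loopB VE E pr P (Suc d) p q S W R" and "admissible S"
  shows "\<forall>D. dominion VE E pr (opp P) S D \<and> card D \<le> q div 2 \<and> (W = {} \<longrightarrow> D = {}) \<longrightarrow> D \<inter> R = {}"
  using assms
proof (induction rule: loopB_induct)
  case (stop G)
  then show ?case by blast
next
  case (step G W W' R)
  show ?case
  proof (intro allI impI)
    fix D assume D: "dominion VE E pr (opp P) G D \<and> card D \<le> q div 2 \<and> (W = {} \<longrightarrow> D = {})"
    have W': "solve VE E pr (opp P) (lower G) d (q div 2) p W'" using step.hyps(2) by simp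
    let ?D' = "D \<inter> remove_attr W' G"
    have "dominion VE E pr (opp P) (remove_attr W' G) ?D'"
      using dominion_trap[OF trap_remove[OF step.prems]] D by blast
    moreover have "card ?D' \<le> q div 2"
      using D dominion_finite step.prems unfolding admissible_def by (meson card_mono inf_le1 le_trans)
    moreover have "W' = {} \<longrightarrow> ?D' = {}"
      using no_small_opp_dominion[OF step.prems _ conjunct1[OF D]] W' D by blast
    ultimately have "?D' \<inter> R = {}"
      using step.IH[OF admissible_remove[OF step.prems]] by blast
    then show "D \<inter> R = {}" using solve_subset(3)[OF step.hyps(3)] by blast
  qed
qed

lemma middle_call_halves:
  assumes G: "admissible G" and empty: "solve VE E pr (opp P) (lower G) d (q div 2) p {}"
    and W: "solve VE E pr (opp P) (lower G) d q p W"
    and D: "dominion VE E pr (opp P) G D" "card D \<le> q"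
  shows "card (D \<inter> remove_attr W G) \<le> q div 2 \<and> (W = {} \<longrightarrow> D \<inter> remove_attr W G = {})"
proof (cases "D = {}")
  case False
  obtain X where X: "X \<noteq> {}" "X \<subseteq> D" "dominion VE E pr (opp P) (lower G) X"
    using opp_dominion_in_lower[OF G D(1) False] by blast
  have "finite D" using dominion_finite[OF _ D(1)] G unfolding admissible_def by blast
  then have "card X \<le> card D" using X(2) by (rule card_mono)
  have big: "q div 2 < card X" using call_contains[OF G empty X(3)] X(1) by (meson not_le subset_empty)
  have "X \<subseteq> W" using call_contains[OF G W X(3)] \<open>card X \<le> card D\<close> D(2) by linarith
  moreover have "W \<subseteq> attr VE E (opp P) W G"
    using attr_contains[of G W "opp P"] solve_subset(1)[OF W] G unfolding admissible_def subH_def by blast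
  ultimately have "D \<inter> remove_attr W G \<subseteq> D - X" by blast
  then have "card (D \<inter> remove_attr W G) \<le> card (D - X)" using \<open>finite D\<close> by (intro card_mono) auto
  also have "\<dots> = card D - card X" using \<open>finite D\<close> X(2) by (intro card_Diff_subset) (auto intro: finite_subset)
  finally have "card (D \<inter> remove_attr W G) \<le> card D - card X" .
  moreover have "q \<le> 2 * (q div 2) + 1" by simp
  ultimately have "card (D \<inter> remove_attr W G) \<le> q div 2" using big D(2) by arith
  moreover have "W \<noteq> {}" using \<open>X \<subseteq> W\<close> X(1) by blast
  ultimately show ?thesis by blast
qed simp

lemma solve_exists:
  assumes G: "admissible G" shows "\<exists>R. solve VE E pr P G (Suc d) p q R"
proof (cases "G = {} \<or> p \<le> 1")
  case True
  then show ?thesis using solve_base by blast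
next
  case False
  obtain G1 where A: "loopA VE E pr P (Suc d) p q G G1" using loopA_exists[OF G] by blast
  have G1: "admissible G1" using loopA_result[OF A G] by blast
  obtain W where W: "solve VE E pr (opp P) (lower G1) d q p W" using recursive_call(1)[OF G1] by blast
  obtain R where "loopB VE E pr P (Suc d) p q (remove_attr W G1) W R"
    using loopB_exists[OF admissible_remove[OF G1]] by blast
  then show ?thesis using solve_main[of G p VE E pr P "Suc d" q G1 W R] False A W by auto
qed

lemma solve_separates:
  assumes G: "admissible G" and R: "solve VE E pr P G (Suc d) p q R"
  shows "separates P G p q R"
proof (cases "G = {} \<or> p \<le> 1")
  case True
  then show ?thesis using solve_trivial[OF True R] separates_trivial G unfolding admissible_def by blast
next
  case False
  obtain G1 W where A: "loopA VE E pr P (Suc d) p q G G1"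
    and W: "solve VE E pr (opp P) (lower G1) d q p W"
    and B: "loopB VE E pr P (Suc d) p q (remove_attr W G1) W R"
    using R False by (cases rule: solve.cases) auto
  have G1: "admissible G1" "trap (opp P) G G1" "solve VE E pr (opp P) (lower G1) d (q div 2) p {}"
    and survive: "\<And>D. dominion VE E pr P G D \<Longrightarrow> card D \<le> p \<Longrightarrow> dominion VE E pr P G1 D"
    using loopA_result[OF A G] by blast+
  have G2: "admissible (remove_attr W G1)" using admissible_remove[OF G1(1)] .
  have "D \<subseteq> R" if "dominion VE E pr P G D" "card D \<le> p" for D
    using loopB_contains[OF B G2] small_dominion_survives[OF G1(1) W survive[OF that]] that(2) by blast
  moreover have "D \<inter> R = {}" if D: "dominion VE E pr (opp P) G D" "card D \<le> q" for D
  proof -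
    have D1: "dominion VE E pr (opp P) G1 (D \<inter> G1)" using dominion_trap[OF G1(2) D(1)] .
    have "card (D \<inter> G1) \<le> q"
      using D dominion_finite G unfolding admissible_def by (meson card_mono inf_le1 le_trans)
    then have "card (D \<inter> G1 \<inter> remove_attr W G1) \<le> q div 2 \<and> (W = {} \<longrightarrow> D \<inter> G1 \<inter> remove_attr W G1 = {})"
      using middle_call_halves[OF G1(1,3) W D1] by blast
    moreover have "dominion VE E pr (opp P) (remove_attr W G1) (D \<inter> G1 \<inter> remove_attr W G1)"
      using dominion_trap[OF trap_remove[OF G1(1)] D1] .
    ultimately have "D \<inter> G1 \<inter> remove_attr W G1 \<inter> R = {}" using loopB_avoids[OF B G2] by blast
    then show ?thesis using solve_subset(3)[OF B] by blast
  qed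
  ultimately show ?thesis unfolding separates_def by blast
qed

end

context finite_game
begin

lemma solve_correct_Suc:
  assumes "solve_correct d" shows "solve_correct (Suc d)"
  unfolding solve_correct_def
proof (intro allI impI)
  fix P G p q
  assume G: "subgame V E G" "\<forall>v\<in>G. pr v \<le> Suc d" and "even (Suc d) \<longleftrightarrow> P = Even"
  interpret solve_step V VE E pr d P p q
    by unfold_locales (use assms \<open>even (Suc d) \<longleftrightarrow> P = Even\<close> in auto)
  have "admissible G" using G unfolding admissible_def by blast
  then show "(\<exists>R. solve VE E pr P G (Suc d) p q R) \<and>
    (\<forall>R. solve VE E pr P G (Suc d) p q R \<longrightarrow> separates P G p q R)"
    using solve_exists solve_separates by blast
qed

lemma solve_correct: "solve_correct d"
  by (induction d) (use solve_correct_0 solve_correct_Suc in auto)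

end

theorem lemma4p1:
  fixes V VE :: "'v set" and E :: "('v \<times> 'v) set" and pr :: "'v \<Rightarrow> nat"
    and G :: "'v set" and pE pO d :: nat
  assumes "parity_game V VE E pr"
    and "subgame V E G"
    and "1 \<le> pE" and "1 \<le> pO"
    and "\<forall>v\<in>G. pr v \<le> d"
  shows "(even d \<longrightarrow>
           (\<exists>R. solve VE E pr Even G d pE pO R) \<and>
           (\<forall>R. solve VE E pr Even G d pE pO R \<longrightarrow>
              (\<forall>D. dominion VE E pr Even G D \<and> card D \<le> pE \<longrightarrow> D \<subseteq> R) \<and>
              (\<forall>D. dominion VE E pr Odd G D \<and> card D \<le> pO \<longrightarrow> D \<inter> R = {})))
       \<and> (odd d \<longrightarrow>
           (\<exists>R. solve VE E pr Odd G d pO pE R) \<and>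
           (\<forall>R. solve VE E pr Odd G d pO pE R \<longrightarrow>
              (\<forall>D. dominion VE E pr Odd G D \<and> card D \<le> pO \<longrightarrow> D \<subseteq> R) \<and>
              (\<forall>D. dominion VE E pr Even G D \<and> card D \<le> pE \<longrightarrow> D \<inter> R = {})))"
proof -
  interpret finite_game V VE E pr by unfold_locales (rule assms(1))
  note correct = solve_correctD[OF solve_correct assms(2,5)]
  show ?thesis
    using correct[where P = Even and p = pE and q = pO] correct[where P = Odd and p = pO and q = pE]
    unfolding separates_def by auto
qed

end
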